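(* Let $N\ge3$ and $G\in\mathcal G_3(N)$. If $s=(x^1,\dots,x^{N-1},u,N)\in S^N\cap S_{nc}$ satisfies $c(G|s)=1$ (and hence has the sure-capture property), then: (1) $|N(u)|=1$, i.e. $u$ is a leaf of $G$; and (2) if $N(u)=\{v\}$, then $c(G|s')=\infty$ for every state $s'=(y^1,\dots,y^{N-1},v,N)\in S^N\cap S_{nc}$.
   Context: Board and moves: $G=(V,E)$ finite, simple, connected, undirected; $N(u)$ is the open neighbourhood of $u$. There are $N\ge3$ tokens, cops $C_1,\dots,C_{N-1}$ (tokens $1,\dots,N-1$) and robber $R$ (token $N$). A state is $s=(x^1,\dots,x^N,n)$ with $x^i\in V$ the position of token $i$ and $n$ the token to move; $S^n$ is the set of states with token $n$ to move; $s$ is a capture state if $x^i=x^N$ for some $i\le N-1$, and $S_{nc}$ is the set of noncapture states. In each turn the token to move moves to a vertex of its closed neighbourhood (may stay put); order $C_1,\dots,C_{N-1},R,C_1,\dots$; the game ends at the first capture. The modified cops-and-robber (CR) game is the two-player zero-sum game where one player controls all cops, the other the robber, and if capture occurs at time $t$ (number of turns) the robber's payoff is $-\gamma^t$ ($0$ if never), $\gamma\in(0,1)$. $\widehat\Sigma^n$ denotes the set of pure positional strategies of token $n$ that are components of optimal strategies in this game (CR-optimal strategies). For $s\in S_{nc}$, whenever CR-optimal play from $s$ leads to capture, it is always the same cop, denoted $\widehat C(s)$, that effects it. State cop number. For $s\in S_{nc}$, $c(G|s)=c_N(G|s)$ is the minimum $k\in\{1,\dots,N-1\}$ for which there exist $k$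 cops and strategies for them such that, starting from $s$, a capture (by any cop) occurs whatever the other $N-k$ tokens (including $R$) do; $c(G|s)=\infty$ if no such $k$ exists. $c(G)$ is the classical cop number of $G$. Graph classes. $\mathcal G(N)=\{G: c(G)>N-1\}$; $\mathcal G_1(N)=\{G\in\mathcal G(N):\exists s\in S_{nc}\text{ with } c(G|s)\in\{2,\dots,N-1\}\}$; $\mathcal G_1'(N)=\mathcal G(N)\setminus\mathcal G_1(N)$; $\mathcal G_2(N)=\{G\in\mathcal G(N): c(G|s)=\infty\text{ for all } s\in S^N\cap S_{nc}\}$; $\mathcal G_2'(N)=\mathcal G_1'(N)\setminus\mathcal G_2(N)$. Say that a state $s\in S_{nc}$ with $c(G|s)=1$ and $\widehat C(s)=C_m$ has the sure-capture property if for every $\widehat\sigma^m\in\widehat\Sigma^m$ and every strategy profile $\sigma^{-m}$ of the other tokens, play from $s$ under $(\widehat\sigma^m,\sigma^{-m})$ ends in a capture in which $C_m$ is on the robber's vertex. $\mathcal G_3(N)$ is the set of $G\in\mathcal G_2'(N)$ in which every $s\in S_{nc}$ with $c(G|s)=1$ has the sure-capture property. *)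

theory Defs
  imports Complex_Main "HOL-Library.Extended_Nat"
begin

definition graph :: "'v set \<Rightarrow> ('v \<Rightarrow> 'v \<Rightarrow> bool) \<Rightarrow> bool" where
  "graph V E \<longleftrightarrow> finite V \<and> V \<noteq> {} \<and>
     (\<forall>u v. E u v \<longrightarrow> u \<in> V \<and> v \<in> V \<and> u \<noteq> v \<and> E v u) \<and>
     (\<forall>u\<in>V. \<forall>v\<in>V. E\<^sup>*\<^sup>* u v)"

definition nbhd :: "'v set \<Rightarrow> ('v \<Rightarrow> 'v \<Rightarrow> bool) \<Rightarrow> 'v \<Rightarrow> 'v set" where
  "nbhd V E u = {w \<in> V. E u w}"

definition cnbhd :: "'v set \<Rightarrow> ('v \<Rightarrow> 'v \<Rightarrow> bool) \<Rightarrow> 'v \<Rightarrow> 'v set" where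
  "cnbhd V E u = insert u (nbhd V E u)"

text \<open>Even
  half-steps t are cop turns, odd ones robber turns.\<close>
definition cops_win :: "'v set \<Rightarrow> ('v \<Rightarrow> 'v \<Rightarrow> bool) \<Rightarrow> nat \<Rightarrow> bool" where
  "cops_win V E k \<longleftrightarrow>
    (\<exists>c0 f. length c0 = k \<and> set c0 \<subseteq> V \<and>
       (\<forall>cs r. length cs = k \<and> set cs \<subseteq> V \<and> r \<in> V \<longrightarrow>
           list_all2 (\<lambda>a b. b \<in> cnbhd V E a) cs (f (cs, r))) \<and>
       (\<forall>r0\<in>V. \<forall>q :: nat \<Rightarrow> 'v list \<times> 'v.
          q 0 = (c0, r0) \<and>
          (\<forall>t. even t \<longrightarrow> q (Suc t) = (f (q t), snd (q t))) \<and>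
          (\<forall>t. odd t \<longrightarrow> fst (q (Suc t)) = fst (q t) \<and> snd (q (Suc t)) \<in> cnbhd V E (snd (q t)))
          \<longrightarrow> (\<exists>t. snd (q t) \<in> set (fst (q t)))))"

definition cop_number :: "'v set \<Rightarrow> ('v \<Rightarrow> 'v \<Rightarrow> bool) \<Rightarrow> nat" where
  "cop_number V E = (LEAST k. 1 \<le> k \<and> cops_win V E k)"

text \<open>A state is a pair (xs, n): xs ! (i - 1) is the position of token i
  (tokens 1..N-1 are the cops, token N the robber), n is the token to move.\<close>
type_synonym 'v state = "'v list \<times> nat"

definition pos :: "'v state \<Rightarrow> nat \<Rightarrow> 'v" where
  "pos s i = fst s ! (i - 1)"

definition tok :: "'v state \<Rightarrow> nat" where
  "tok s = snd s"

definition valid_state :: "'v set \<Rightarrow> nat \<Rightarrow> 'v state \<Rightarrow> bool" where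
  "valid_state V N s \<longleftrightarrow> length (fst s) = N \<and> set (fst s) \<subseteq> V \<and> tok s \<in> {1..N}"

definition capture :: "nat \<Rightarrow> 'v state \<Rightarrow> bool" where
  "capture N s \<longleftrightarrow> (\<exists>i\<in>{1..N-1}. pos s i = pos s N)"

definition next_tok :: "nat \<Rightarrow> nat \<Rightarrow> nat" where
  "next_tok N n = (if n = N then 1 else n + 1)"

definition move :: "nat \<Rightarrow> 'v state \<Rightarrow> 'v \<Rightarrow> 'v state" where
  "move N s w = ((fst s)[tok s - 1 := w], next_tok N (tok s))"

text \<open>Arbitrary legal plays (sequences of states), which represent the outcomes of
  arbitrary (possibly history dependent) behaviour of the tokens.\<close>
definition legal_play :: "'v set \<Rightarrow> ('v \<Rightarrow> 'v \<Rightarrow> bool) \<Rightarrow> nat \<Rightarrow> (nat \<Rightarrow> 'v state) \<Rightarrow> bool" where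
  "legal_play V E N p \<longleftrightarrow> valid_state V N (p 0) \<and>
     (\<forall>t. \<exists>w\<in>cnbhd V E (pos (p t) (tok (p t))). p (Suc t) = move N (p t) w)"

type_synonym 'v strat = "'v state \<Rightarrow> 'v"

definition legal_strat :: "'v set \<Rightarrow> ('v \<Rightarrow> 'v \<Rightarrow> bool) \<Rightarrow> nat \<Rightarrow> nat \<Rightarrow> 'v strat \<Rightarrow> bool" where
  "legal_strat V E N i \<tau> \<longleftrightarrow>
     (\<forall>s. valid_state V N s \<and> tok s = i \<longrightarrow> \<tau> s \<in> cnbhd V E (pos s i))"

definition consistent :: "nat \<Rightarrow> nat \<Rightarrow> 'v strat \<Rightarrow> (nat \<Rightarrow> 'v state) \<Rightarrow> bool" where
  "consistent N i \<tau> p \<longleftrightarrow> (\<forall>t. tok (p t) = i \<longrightarrow> p (Suc t) = move N (p t) (\<tau> (p t)))"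

definition ends_in_capture_by :: "nat \<Rightarrow> (nat \<Rightarrow> 'v state) \<Rightarrow> nat \<Rightarrow> bool" where
  "ends_in_capture_by N p m \<longleftrightarrow>
     (\<exists>t. capture N (p t) \<and> (\<forall>t'<t. \<not> capture N (p t')) \<and> pos (p t) m = pos (p t) N)"

primrec prof_play :: "nat \<Rightarrow> (nat \<Rightarrow> 'v strat) \<Rightarrow> 'v state \<Rightarrow> nat \<Rightarrow> 'v state" where
  "prof_play N \<sigma> s 0 = s"
| "prof_play N \<sigma> s (Suc t) =
     move N (prof_play N \<sigma> s t) (\<sigma> (tok (prof_play N \<sigma> s t)) (prof_play N \<sigma> s t))"

definition payoff :: "real \<Rightarrow> nat \<Rightarrow> (nat \<Rightarrow> 'v strat) \<Rightarrow> 'v state \<Rightarrow> real" where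
  "payoff \<gamma> N \<sigma> s =
     (if \<exists>t. capture N (prof_play N \<sigma> s t)
      then - (\<gamma> ^ (LEAST t. capture N (prof_play N \<sigma> s t))) else 0)"

definition legal_profile :: "'v set \<Rightarrow> ('v \<Rightarrow> 'v \<Rightarrow> bool) \<Rightarrow> nat \<Rightarrow> (nat \<Rightarrow> 'v strat) \<Rightarrow> bool" where
  "legal_profile V E N \<sigma> \<longleftrightarrow> (\<forall>i\<in>{1..N}. legal_strat V E N i (\<sigma> i))"

text \<open>Optimal (saddle point) strategy pair of the two-player zero-sum game:
  the cops' player controls tokens 1..N-1 (minimiser), the robber token N
  (maximiser); optimality is required from every initial state.\<close>
definition optimal_profile ::
  "'v set \<Rightarrow> ('v \<Rightarrow> 'v \<Rightarrow> bool) \<Rightarrow> nat \<Rightarrow> real \<Rightarrow> (nat \<Rightarrow> 'v strat) \<Rightarrow> bool" where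
  "optimal_profile V E N \<gamma> \<sigma> \<longleftrightarrow> legal_profile V E N \<sigma> \<and>
     (\<forall>\<tau>. legal_strat V E N N \<tau> \<longrightarrow>
        (\<forall>s. valid_state V N s \<longrightarrow> payoff \<gamma> N (\<sigma>(N := \<tau>)) s \<le> payoff \<gamma> N \<sigma> s)) \<and>
     (\<forall>\<sigma>'. legal_profile V E N \<sigma>' \<and> \<sigma>' N = \<sigma> N \<longrightarrow>
        (\<forall>s. valid_state V N s \<longrightarrow> payoff \<gamma> N \<sigma> s \<le> payoff \<gamma> N \<sigma>' s))"

definition CR_optimal :: "'v set \<Rightarrow> ('v \<Rightarrow> 'v \<Rightarrow> bool) \<Rightarrow> nat \<Rightarrow> real \<Rightarrow> nat \<Rightarrow> 'v strat \<Rightarrow> bool" where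
  "CR_optimal V E N \<gamma> n \<tau> \<longleftrightarrow> (\<exists>\<sigma>. optimal_profile V E N \<gamma> \<sigma> \<and> \<sigma> n = \<tau>)"

definition CR_capturer :: "'v set \<Rightarrow> ('v \<Rightarrow> 'v \<Rightarrow> bool) \<Rightarrow> nat \<Rightarrow> real \<Rightarrow> 'v state \<Rightarrow> nat \<Rightarrow> bool" where
  "CR_capturer V E N \<gamma> s m \<longleftrightarrow> m \<in> {1..N-1} \<and>
     (\<exists>\<sigma>. optimal_profile V E N \<gamma> \<sigma> \<and> ends_in_capture_by N (prof_play N \<sigma> s) m)"

definition sure_capture :: "'v set \<Rightarrow> ('v \<Rightarrow> 'v \<Rightarrow> bool) \<Rightarrow> nat \<Rightarrow> real \<Rightarrow> 'v state \<Rightarrow> bool" where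
  "sure_capture V E N \<gamma> s \<longleftrightarrow>
     (\<exists>m. CR_capturer V E N \<gamma> s m \<and>
        (\<forall>\<tau>. CR_optimal V E N \<gamma> m \<tau> \<longrightarrow>
           (\<forall>p. legal_play V E N p \<and> p 0 = s \<and> consistent N m \<tau> p \<longrightarrow>
                ends_in_capture_by N p m)))"

definition forces_capture :: "'v set \<Rightarrow> ('v \<Rightarrow> 'v \<Rightarrow> bool) \<Rightarrow> nat \<Rightarrow> 'v state \<Rightarrow> nat \<Rightarrow> bool" where
  "forces_capture V E N s k \<longleftrightarrow>
     (\<exists>K \<tau>. K \<subseteq> {1..N-1} \<and> card K = k \<and> (\<forall>i\<in>K. legal_strat V E N i (\<tau> i)) \<and>
        (\<forall>p. legal_play V E N p \<and> p 0 = s \<and> (\<forall>i\<in>K. consistent N i (\<tau> i) p) \<longrightarrow>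
             (\<exists>t. capture N (p t))))"

definition state_cop_number :: "'v set \<Rightarrow> ('v \<Rightarrow> 'v \<Rightarrow> bool) \<Rightarrow> nat \<Rightarrow> 'v state \<Rightarrow> enat" where
  "state_cop_number V E N s =
     (if \<exists>k\<in>{1..N-1}. forces_capture V E N s k
      then enat (LEAST k. k \<in> {1..N-1} \<and> forces_capture V E N s k) else \<infinity>)"

definition noncapture_state :: "'v set \<Rightarrow> nat \<Rightarrow> 'v state \<Rightarrow> bool" where
  "noncapture_state V N s \<longleftrightarrow> valid_state V N s \<and> \<not> capture N s"

definition class_G :: "'v set \<Rightarrow> ('v \<Rightarrow> 'v \<Rightarrow> bool) \<Rightarrow> nat \<Rightarrow> bool" where
  "class_G V E N \<longleftrightarrow> cop_number V E > N - 1"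

definition class_G1 :: "'v set \<Rightarrow> ('v \<Rightarrow> 'v \<Rightarrow> bool) \<Rightarrow> nat \<Rightarrow> bool" where
  "class_G1 V E N \<longleftrightarrow> class_G V E N \<and>
     (\<exists>s. noncapture_state V N s \<and> (\<exists>k. 2 \<le> k \<and> k \<le> N - 1 \<and> state_cop_number V E N s = enat k))"

definition class_G1' :: "'v set \<Rightarrow> ('v \<Rightarrow> 'v \<Rightarrow> bool) \<Rightarrow> nat \<Rightarrow> bool" where
  "class_G1' V E N \<longleftrightarrow> class_G V E N \<and> \<not> class_G1 V E N"

definition class_G2 :: "'v set \<Rightarrow> ('v \<Rightarrow> 'v \<Rightarrow> bool) \<Rightarrow> nat \<Rightarrow> bool" where
  "class_G2 V E N \<longleftrightarrow> class_G V E N \<and>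
     (\<forall>s. noncapture_state V N s \<and> tok s = N \<longrightarrow> state_cop_number V E N s = \<infinity>)"

definition class_G2' :: "'v set \<Rightarrow> ('v \<Rightarrow> 'v \<Rightarrow> bool) \<Rightarrow> nat \<Rightarrow> bool" where
  "class_G2' V E N \<longleftrightarrow> class_G1' V E N \<and> \<not> class_G2 V E N"

definition class_G3 :: "'v set \<Rightarrow> ('v \<Rightarrow> 'v \<Rightarrow> bool) \<Rightarrow> nat \<Rightarrow> real \<Rightarrow> bool" where
  "class_G3 V E N \<gamma> \<longleftrightarrow> class_G2' V E N \<and>
     (\<forall>s. noncapture_state V N s \<and> state_cop_number V E N s = 1 \<longrightarrow> sure_capture V E N \<gamma> s)"

end

theory Submission
  imports Defs
begin

text \<open>Suppose a single cop C_m surely captures from s, robber on u.  In the play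
  where every other token stays put, C_m steps onto u from some neighbour x.  As
  C_m's strategy has to succeed whatever the other tokens do, it only depends on
  the positions of C_m and the robber, so it can be transplanted: from every
  robber-to-move state with C_m on x and the robber on u, C_m alone forces capture.
  If u had a second neighbour b, put all other cops on b: that state has cop
  number 1, hence the sure-capture property, yet the robber can step onto a cop
  other than the designated capturer.  So N(u) = {x}.  If a state with the robber
  on x had finite cop number, it would be 1 (there are no states of cop number
  between 2 and N - 1), so x would be a leaf too; then G is a single edge and one
  cop wins, contradicting c(G) > N - 1.\<close>

lemma tok_move [simp]: "tok (move N s w) = next_tok N (tok s)"
  by (simp add: move_def tok_def)

lemma fst_move [simp]: "fst (move N s w) = (fst s)[tok s - 1 := w]"
  by (simp add: move_def tok_def)

lemma pos_move:
  assumes "length (fst z) = N" "tok z \<in> {1..N}" "i \<in> {1..N}"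
  shows "pos (move N z w) i = (if i = tok z then w else pos z i)"
  using assms by (auto simp: pos_def nth_list_update)

lemma valid_state_move:
  assumes "valid_state V N z" "w \<in> cnbhd V E (pos z (tok z))"
  shows "valid_state V N (move N z w)"
proof -
  have "pos z (tok z) \<in> V" using assms(1) by (auto simp: valid_state_def pos_def)
  then have "w \<in> V" using assms(2) by (auto simp: cnbhd_def nbhd_def)
  moreover have "set ((fst z)[tok z - 1 := w]) \<subseteq> insert w (set (fst z))"
    by (rule set_update_subset_insert)
  ultimately show ?thesis using assms(1) by (auto simp: valid_state_def next_tok_def)
qed

lemma legal_play_valid:
  assumes "legal_play V E N p"
  shows "valid_state V N (p t)"
proof (induction t)
  case 0
  then show ?case using assms by (simp add: legal_play_def)
next
  case (Suc t)
  from assms obtain w where "w \<in> cnbhd V E (pos (p t) (tok (p t)))" "p (Suc t) = move N (p t) w"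
    unfolding legal_play_def by blast
  with Suc show ?case by (metis valid_state_move)
qed

lemma tok_legal_play:
  assumes "legal_play V E N p" "tok (p 0) = N" "N \<ge> 2"
  shows "tok (p n) = (if n mod N = 0 then N else n mod N)"
proof (induction n)
  case 0
  then show ?case using assms by simp
next
  case (Suc n)
  have "tok (p (Suc n)) = next_tok N (tok (p n))"
    using assms(1) unfolding legal_play_def by (metis tok_move)
  moreover have "n mod N < N" using assms(3) by simp
  ultimately show ?case using Suc by (auto simp: next_tok_def mod_Suc)
qed

lemma legal_play_pos_unchanged:
  assumes "legal_play V E N p" "i \<in> {1..N}" "\<And>n. a \<le> n \<Longrightarrow> n < a + k \<Longrightarrow> tok (p n) \<noteq> i"
  shows "pos (p (a + k)) i = pos (p a) i"
  using assms(3)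
proof (induction k)
  case 0
  then show ?case by simp
next
  case (Suc k)
  obtain w where "p (Suc (a + k)) = move N (p (a + k)) w"
    using assms(1) unfolding legal_play_def by blast
  moreover have "length (fst (p (a + k))) = N" "tok (p (a + k)) \<in> {1..N}"
    using legal_play_valid[OF assms(1)] by (auto simp: valid_state_def)
  moreover have "tok (p (a + k)) \<noteq> i" using Suc.prems[of "a + k"] by simp
  moreover have "pos (p (a + k)) i = pos (p a) i" using Suc by simp
  ultimately show ?case using pos_move[of "p (a + k)" N i w] assms(2) by simp
qed

lemma nbhd_sym:
  assumes "graph V E" "b \<in> nbhd V E a"
  shows "a \<in> nbhd V E b"
  using assms unfolding graph_def nbhd_def by blast

primrec rule_play :: "nat \<Rightarrow> 'v strat \<Rightarrow> 'v state \<Rightarrow> nat \<Rightarrow> 'v state" where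
  "rule_play N f s 0 = s"
| "rule_play N f s (Suc n) = move N (rule_play N f s n) (f (rule_play N f s n))"

lemma legal_rule_play:
  assumes "valid_state V N s" "\<And>z. valid_state V N z \<Longrightarrow> f z \<in> cnbhd V E (pos z (tok z))"
  shows "legal_play V E N (rule_play N f s)"
proof -
  have valid: "valid_state V N (rule_play N f s n)" for n
    by (induction n) (auto intro: valid_state_move assms)
  show ?thesis
    unfolding legal_play_def using assms(1) assms(2)[OF valid] by auto
qed

lemma consistent_rule_play:
  assumes "\<And>z. tok z = i \<Longrightarrow> f z = \<tau> z"
  shows "consistent N i \<tau> (rule_play N f s)"
  unfolding consistent_def using assms by auto

definition splice :: "nat \<Rightarrow> (nat \<Rightarrow> 'a) \<Rightarrow> (nat \<Rightarrow> 'a) \<Rightarrow> nat \<Rightarrow> 'a" where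
  "splice j p q n = (if n < j then p n else q (n - j))"

lemma splice_steps:
  assumes "q 0 = p j" "\<And>t. R (p t) (p (Suc t))" "\<And>t. R (q t) (q (Suc t))"
  shows "R (splice j p q t) (splice j p q (Suc t))"
proof -
  consider "Suc t < j" | "Suc t = j" | "j \<le> t" by linarith
  then show ?thesis
  proof cases
    case 3
    then show ?thesis using assms(3)[of "t - j"] by (simp add: splice_def Suc_diff_le)
  qed (use assms in \<open>auto simp: splice_def\<close>)
qed

lemma legal_play_splice:
  assumes "legal_play V E N p" "legal_play V E N q" "q 0 = p j"
  shows "legal_play V E N (splice j p q)"
proof -
  have "valid_state V N (splice j p q 0)"
    using assms legal_play_valid[OF assms(1)] by (simp add: splice_def)
  moreover have "\<exists>w\<in>cnbhd V E (pos z (tok z)). z' = move N z w"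
    if "z = splice j p q t" "z' = splice j p q (Suc t)" for t z z'
    using that splice_steps[where R = "\<lambda>z z'. \<exists>w\<in>cnbhd V E (pos z (tok z)). z' = move N z w"
        and p = p and q = q and j = j and t = t] assms unfolding legal_play_def by blast
  ultimately show ?thesis unfolding legal_play_def by blast
qed

lemma consistent_splice:
  assumes "consistent N i \<tau> p" "consistent N i \<tau> q" "q 0 = p j"
  shows "consistent N i \<tau> (splice j p q)"
  using assms splice_steps[where R = "\<lambda>z z'. tok z = i \<longrightarrow> z' = move N z (\<tau> z)"
      and p = p and q = q and j = j]
  unfolding consistent_def by blast

subsection \<open>Transplanting a single cop and the robber\<close>

definition transplant :: "nat \<Rightarrow> nat \<Rightarrow> 'v list \<Rightarrow> 'v state \<Rightarrow> 'v state" where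
  "transplant N m ys z =
     (map (\<lambda>i. if i = m - 1 \<or> i = N - 1 then fst z ! i else ys ! i) [0..<N], snd z)"

lemma tok_transplant [simp]: "tok (transplant N m ys z) = tok z"
  by (simp add: transplant_def tok_def)

lemma pos_transplant_cop:
  assumes "1 \<le> m" "m \<le> N"
  shows "pos (transplant N m ys z) m = pos z m"
  using assms by (simp add: transplant_def pos_def)

lemma pos_transplant_robber:
  assumes "1 \<le> N"
  shows "pos (transplant N m ys z) N = pos z N"
  using assms by (simp add: transplant_def pos_def)

lemma valid_state_transplant:
  assumes "valid_state V N z" "length ys = N" "set ys \<subseteq> V"
  shows "valid_state V N (transplant N m ys z)"
  using assms by (auto simp: transplant_def valid_state_def tok_def)

lemma transplant_same:
  assumes "length (fst z) = N" "length ys = N" "1 \<le> m" "m \<le> N"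
    "pos z m = ys ! (m - 1)" "pos z N = ys ! (N - 1)"
  shows "transplant N m ys z = (ys, snd z)"
  using assms by (auto simp: transplant_def pos_def intro!: nth_equalityI)

lemma transplant_move_tracked:
  assumes "length (fst z) = N" "tok z = m \<or> tok z = N" "1 \<le> m" "m \<le> N"
  shows "transplant N m ys (move N z w) = move N (transplant N m ys z) w"
  using assms
  by (auto simp: transplant_def move_def tok_def nth_list_update intro!: nth_equalityI)

lemma transplant_move_bystander:
  assumes "length (fst z) = N" "tok z \<in> {1..N}" "tok z \<noteq> m" "tok z \<noteq> N" "1 \<le> m" "m \<le> N"
  shows "transplant N m ys (move N z w)
           = move N (transplant N m ys z) (pos (transplant N m ys z) (tok z))"
  using assms
  by (auto simp: transplant_def move_def tok_def pos_def nth_list_update intro!: nth_equalityI)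

lemma legal_play_transplant:
  assumes q: "legal_play V E N q" and m: "1 \<le> m" "m < N"
    and ys: "length ys = N" "set ys \<subseteq> V"
  shows "legal_play V E N (\<lambda>k. transplant N m ys (q k))"
  unfolding legal_play_def
proof (intro conjI allI)
  show "valid_state V N (transplant N m ys (q 0))"
    using valid_state_transplant[OF legal_play_valid[OF q] ys] .
next
  fix k
  let ?z = "transplant N m ys (q k)"
  have lq: "length (fst (q k)) = N" "tok (q k) \<in> {1..N}"
    using legal_play_valid[OF q] by (auto simp: valid_state_def)
  obtain w where w: "w \<in> cnbhd V E (pos (q k) (tok (q k)))" "q (Suc k) = move N (q k) w"
    using q unfolding legal_play_def by blast
  show "\<exists>w\<in>cnbhd V E (pos ?z (tok ?z)). transplant N m ys (q (Suc k)) = move N ?z w"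
  proof (cases "tok (q k) = m \<or> tok (q k) = N")
    case True
    then have "pos ?z (tok (q k)) = pos (q k) (tok (q k))"
      using pos_transplant_cop[of m N ys "q k"] pos_transplant_robber[of N m ys "q k"] m
      by (elim disjE) simp_all
    then show ?thesis using w True transplant_move_tracked[OF lq(1) True] m
      by (intro bexI[of _ w]) auto
  next
    case False
    then show ?thesis using w transplant_move_bystander[OF lq] m
      by (intro bexI[of _ "pos ?z (tok ?z)"]) (auto simp: cnbhd_def)
  qed
qed

lemma consistent_transplant:
  assumes q: "legal_play V E N q" "consistent N m (\<lambda>z. \<tau> (transplant N m ys z)) q"
    and m: "1 \<le> m" "m < N"
  shows "consistent N m \<tau> (\<lambda>k. transplant N m ys (q k))"
  unfolding consistent_def
proof (intro allI impI)
  fix k assume "tok (transplant N m ys (q k)) = m"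
  then have tk: "tok (q k) = m" by simp
  have len: "length (fst (q k)) = N"
    using legal_play_valid[OF q(1)] by (auto simp: valid_state_def)
  moreover have "q (Suc k) = move N (q k) (\<tau> (transplant N m ys (q k)))"
    using q(2) tk unfolding consistent_def by blast
  ultimately show "transplant N m ys (q (Suc k))
      = move N (transplant N m ys (q k)) (\<tau> (transplant N m ys (q k)))"
    using transplant_move_tracked[OF len disjI1[OF tk]] m by simp
qed

lemma legal_strat_transplant:
  assumes "legal_strat V E N m \<tau>" "1 \<le> m" "m \<le> N" "length ys = N" "set ys \<subseteq> V"
  shows "legal_strat V E N m (\<lambda>z. \<tau> (transplant N m ys z))"
  unfolding legal_strat_def
proof (intro allI impI)
  fix z assume z: "valid_state V N z \<and> tok z = m"
  then have "\<tau> (transplant N m ys z) \<in> cnbhd V E (pos (transplant N m ys z) m)"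
    using assms(1) valid_state_transplant[OF _ assms(4,5)] unfolding legal_strat_def
    by (metis tok_transplant)
  then show "\<tau> (transplant N m ys z) \<in> cnbhd V E (pos z m)"
    using pos_transplant_cop[OF assms(2,3), of ys z] by metis
qed

text \<open>The prefix of p up to t0 followed by the transplanted continuation is a play
  from s consistent with the strategy, so it ends in a capture by cop m, which
  must happen in the continuation.\<close>
lemma forces_capture_transplant:
  assumes m: "1 \<le> m" "m < N"
    and \<tau>: "legal_strat V E N m \<tau>"
    and sure: "\<forall>p. legal_play V E N p \<and> p 0 = s \<and> consistent N m \<tau> p \<longrightarrow> ends_in_capture_by N p m"
    and p: "legal_play V E N p" "p 0 = s" "consistent N m \<tau> p" "\<forall>n\<le>t0. \<not> capture N (p n)"
    and s': "valid_state V N s'" "tok s' = tok (p t0)"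
      "pos s' m = pos (p t0) m" "pos s' N = pos (p t0) N"
  shows "forces_capture V E N s' 1"
proof -
  define ys where "ys = fst (p t0)"
  have ys: "length ys = N" "set ys \<subseteq> V"
    using legal_play_valid[OF p(1)] by (auto simp: ys_def valid_state_def)
  define \<tau>' where "\<tau>' z = \<tau> (transplant N m ys z)" for z
  have legal': "legal_strat V E N m \<tau>'"
    unfolding \<tau>'_def using legal_strat_transplant[OF \<tau> _ _ ys] m by simp
  have "\<exists>t. capture N (q t)"
    if q: "legal_play V E N q" "q 0 = s'" "consistent N m \<tau>' q" for q
  proof -
    let ?q = "\<lambda>k. transplant N m ys (q k)"
    have "?q 0 = (ys, snd s')"
      using transplant_same[of s' N ys m] s' ys m q(2)
      by (auto simp: valid_state_def ys_def pos_def)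
    then have start: "?q 0 = p t0" using s'(2) by (simp add: ys_def tok_def)
    have "legal_play V E N (splice t0 p ?q)"
      using legal_play_splice[OF p(1) legal_play_transplant[OF q(1) m ys] start] .
    moreover have "consistent N m \<tau> (splice t0 p ?q)"
      using consistent_splice[OF p(3) consistent_transplant[OF q(1) _ m] start] q(3)
      unfolding \<tau>'_def by blast
    moreover have "splice t0 p ?q 0 = s" using p(2) start by (simp add: splice_def)
    ultimately obtain t where t: "capture N (splice t0 p ?q t)"
      "pos (splice t0 p ?q t) m = pos (splice t0 p ?q t) N"
      using sure unfolding ends_in_capture_by_def by blast
    have "\<not> t < t0" using t(1) p(4) by (auto simp: splice_def)
    then have "pos (q (t - t0)) m = pos (q (t - t0)) N"
      using t(2) pos_transplant_cop[of m N ys] pos_transplant_robber[of N m ys] m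
      by (simp add: splice_def)
    then have "capture N (q (t - t0))" using m unfolding capture_def by force
    then show ?thesis by blast
  qed
  then show ?thesis
    unfolding forces_capture_def using m legal'
    by (intro exI[of _ "{m}"] exI[of _ "\<lambda>_. \<tau>'"]) auto
qed

subsection \<open>The robber's vertex is a leaf\<close>

definition stay_put :: "nat \<Rightarrow> 'v strat \<Rightarrow> 'v strat" where
  "stay_put m \<tau> z = (if tok z = m then \<tau> z else pos z (tok z))"

lemma stay_put_active [simp]: "tok z = m \<Longrightarrow> stay_put m \<tau> z = \<tau> z"
  and stay_put_passive [simp]: "tok z \<noteq> m \<Longrightarrow> stay_put m \<tau> z = pos z (tok z)"
  by (simp_all add: stay_put_def)

lemma stay_put_play:
  assumes "valid_state V N s" "legal_strat V E N m \<tau>"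
  shows "legal_play V E N (rule_play N (stay_put m \<tau>) s)"
    and "consistent N m \<tau> (rule_play N (stay_put m \<tau>) s)"
proof -
  show "legal_play V E N (rule_play N (stay_put m \<tau>) s)"
  proof (rule legal_rule_play[OF assms(1)])
    fix z assume "valid_state V N z"
    with assms(2) show "stay_put m \<tau> z \<in> cnbhd V E (pos z (tok z))"
      unfolding legal_strat_def stay_put_def cnbhd_def by (metis insertI1)
  qed
  show "consistent N m \<tau> (rule_play N (stay_put m \<tau>) s)"
    by (rule consistent_rule_play) simp
qed

lemma pos_rule_play_Suc:
  assumes "legal_play V E N (rule_play N f s)" "i \<in> {1..N}"
  shows "pos (rule_play N f s (Suc n)) i
           = (if i = tok (rule_play N f s n) then f (rule_play N f s n) else pos (rule_play N f s n) i)"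
  using pos_move[of "rule_play N f s n" N i] assms(2) legal_play_valid[OF assms(1), of n]
  by (simp add: valid_state_def)

lemma robber_pos_stay_put_play:
  assumes "legal_play V E N (rule_play N (stay_put m \<tau>) s)" "m \<noteq> N" "N \<ge> 1"
  shows "pos (rule_play N (stay_put m \<tau>) s n) N = pos s N"
proof (induction n)
  case (Suc n)
  then show ?case using pos_rule_play_Suc[OF assms(1), of N n] assms(2,3)
    by (cases "tok (rule_play N (stay_put m \<tau>) s n) = m") auto
qed simp

lemma stay_put_last_approach:
  assumes m: "1 \<le> m" "m < N"
    and s: "noncapture_state V N s" and \<tau>: "legal_strat V E N m \<tau>"
    and captured: "ends_in_capture_by N (rule_play N (stay_put m \<tau>) s) m"
  defines "p \<equiv> rule_play N (stay_put m \<tau>) s"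
  obtains t1 where "tok (p t1) = m" "\<forall>n\<le>t1. \<not> capture N (p n)" "pos s N \<in> nbhd V E (pos (p t1) m)"
proof -
  let ?u = "pos s N"
  have legal: "legal_play V E N p"
    using stay_put_play(1)[OF _ \<tau>] s by (simp add: p_def noncapture_state_def)
  have robber_stays: "pos (p n) N = ?u" for n
    using robber_pos_stay_put_play[OF legal[unfolded p_def]] m by (simp add: p_def)
  have capture_by_m: "capture N z" if "pos z m = pos z N" for z
    using that m unfolding capture_def by force
  obtain t where t: "\<forall>t'<t. \<not> capture N (p t')" "pos (p t) m = ?u"
    using captured robber_stays unfolding ends_in_capture_by_def p_def by fastforce
  have "t \<noteq> 0"
  proof
    assume "t = 0"
    then have "capture N s" using t(2) capture_by_m[of s] by (simp add: p_def)
    then show False using s by (simp add: noncapture_state_def)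
  qed
  then obtain t1 where t1: "t = Suc t1" by (cases t) auto
  have step: "pos (p t) m = (if m = tok (p t1) then stay_put m \<tau> (p t1) else pos (p t1) m)"
    using pos_rule_play_Suc[OF legal[unfolded p_def], of m t1] t1 m by (simp add: p_def)
  define x where "x = pos (p t1) m"
  have "x \<noteq> ?u" using t(1) t1 capture_by_m[of "p t1"] robber_stays by (auto simp: x_def)
  then have tok_t1: "tok (p t1) = m" using step t(2) by (auto simp: x_def split: if_splits)
  then have "\<tau> (p t1) = ?u" using step t(2) by simp
  then have "?u \<in> cnbhd V E x"
    using \<tau> legal_play_valid[OF legal, of t1] tok_t1 unfolding legal_strat_def x_def by metis
  with \<open>x \<noteq> ?u\<close> have "?u \<in> nbhd V E x" by (simp add: cnbhd_def)
  moreover have "\<forall>n\<le>t1. \<not> capture N (p n)" using t(1) t1 by auto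
  ultimately show ?thesis using that tok_t1 by (simp add: x_def)
qed

lemma capturer_adjacent_forcing_position:
  assumes N: "N \<ge> 2" and m: "1 \<le> m" "m < N"
    and s: "noncapture_state V N s" "tok s = N"
    and \<tau>: "legal_strat V E N m \<tau>"
    and sure: "\<forall>p. legal_play V E N p \<and> p 0 = s \<and> consistent N m \<tau> p \<longrightarrow> ends_in_capture_by N p m"
  obtains x where "pos s N \<in> nbhd V E x"
    "\<And>s'. valid_state V N s' \<Longrightarrow> tok s' = N \<Longrightarrow> pos s' m = x \<Longrightarrow> pos s' N = pos s N
      \<Longrightarrow> forces_capture V E N s' 1"
proof -
  define p where "p = rule_play N (stay_put m \<tau>) s"
  have vs: "valid_state V N s" using s(1) by (simp add: noncapture_state_def)
  have legal: "legal_play V E N p" and cons: "consistent N m \<tau> p"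
    using stay_put_play[OF vs \<tau>] by (simp_all add: p_def)
  have "ends_in_capture_by N p m" using sure legal cons by (simp add: p_def)
  then obtain t1 where tok_t1: "tok (p t1) = m" and no_capture: "\<forall>n\<le>t1. \<not> capture N (p n)"
    and adjacent: "pos s N \<in> nbhd V E (pos (p t1) m)"
    using stay_put_last_approach[OF m s(1) \<tau>] unfolding p_def by blast
  txt \<open>Cop m last moved at time t1 = t0 + m; t0 is the robber turn before.\<close>
  have tok_p: "tok (p n) = (if n mod N = 0 then N else n mod N)" for n
    using tok_legal_play[OF legal _ N] s(2) by (simp add: p_def)
  define t0 where "t0 = N * (t1 div N)"
  have "t1 mod N = m" using tok_p[of t1] tok_t1 m by (auto split: if_splits)
  then have t1_eq: "t1 = t0 + m" using mult_div_mod_eq[of N t1] by (simp add: t0_def)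
  have "pos (p (t0 + m)) m = pos (p t0) m"
  proof (rule legal_play_pos_unchanged[OF legal])
    show "m \<in> {1..N}" using m by simp
  next
    fix n assume "t0 \<le> n" "n < t0 + m"
    then obtain k where "n = t0 + k" "k < m" by (metis le_add_diff_inverse add_less_cancel_left)
    then show "tok (p n) \<noteq> m" using tok_p[of n] m by (simp add: t0_def)
  qed
  then have x_t0: "pos (p t0) m = pos (p t1) m" using t1_eq by simp
  have robber_t0: "pos (p t0) N = pos s N"
    using robber_pos_stay_put_play[OF legal[unfolded p_def]] m by (simp add: p_def)
  have forcing: "forces_capture V E N s' 1"
    if "valid_state V N s'" "tok s' = N" "pos s' m = pos (p t1) m" "pos s' N = pos s N" for s'
  proof (rule forces_capture_transplant[OF m \<tau> sure legal _ cons _ that(1)])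
    show "p 0 = s" by (simp add: p_def)
    show "\<forall>n\<le>t0. \<not> capture N (p n)" using no_capture t1_eq by auto
    show "tok s' = tok (p t0)" using tok_p[of t0] that(2) by (simp add: t0_def)
  qed (use that x_t0 robber_t0 in auto)
  show ?thesis using that adjacent forcing by blast
qed

lemma sure_captureE:
  assumes "sure_capture V E N \<gamma> s"
  obtains m \<tau> where "m \<in> {1..N-1}" "legal_strat V E N m \<tau>"
    "\<forall>p. legal_play V E N p \<and> p 0 = s \<and> consistent N m \<tau> p \<longrightarrow> ends_in_capture_by N p m"
proof -
  obtain m where m: "CR_capturer V E N \<gamma> s m"
    "\<forall>\<tau>. CR_optimal V E N \<gamma> m \<tau> \<longrightarrow>
       (\<forall>p. legal_play V E N p \<and> p 0 = s \<and> consistent N m \<tau> p \<longrightarrow> ends_in_capture_by N p m)"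
    using assms unfolding sure_capture_def by blast
  then obtain \<sigma> where \<sigma>: "optimal_profile V E N \<gamma> \<sigma>" "m \<in> {1..N-1}"
    unfolding CR_capturer_def by blast
  then have "CR_optimal V E N \<gamma> m (\<sigma> m)" "legal_strat V E N m (\<sigma> m)"
    unfolding CR_optimal_def optimal_profile_def legal_profile_def by auto
  then show ?thesis using that m \<sigma> by blast
qed

lemma state_cop_number_eq_1I:
  assumes "forces_capture V E N s 1" "N \<ge> 2"
  shows "state_cop_number V E N s = 1"
proof -
  have "(LEAST k. k \<in> {1..N-1} \<and> forces_capture V E N s k) = 1"
    by (rule Least_equality) (use assms in auto)
  then show ?thesis using assms unfolding state_cop_number_def by (auto simp: one_enat_def)
qed

lemma state_cop_number_finite_class_G1':
  assumes "class_G1' V E N" "noncapture_state V N s" "state_cop_number V E N s \<noteq> \<infinity>"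
  shows "state_cop_number V E N s = 1"
proof -
  have ex: "\<exists>k\<in>{1..N-1}. forces_capture V E N s k"
    using assms(3) unfolding state_cop_number_def by (auto split: if_splits)
  define k where "k = (LEAST k. k \<in> {1..N-1} \<and> forces_capture V E N s k)"
  have k: "k \<in> {1..N-1}"
    using LeastI_ex[of "\<lambda>k. k \<in> {1..N-1} \<and> forces_capture V E N s k"] ex
    unfolding k_def by blast
  have scn: "state_cop_number V E N s = enat k"
    using ex unfolding state_cop_number_def k_def by simp
  have "\<not> (2 \<le> k \<and> k \<le> N - 1)"
    using assms(1,2) scn unfolding class_G1'_def class_G1_def by blast
  then have "k = 1" using k by auto
  then show ?thesis using scn by (simp add: one_enat_def)
qed

text \<open>From such a state the robber steps onto a cop that is not the designated
  capturer, so the first capture is not made by it.\<close>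
lemma fork_not_sure_capture:
  assumes N: "N \<ge> 3" and m: "1 \<le> m" "m < N"
    and ss: "noncapture_state V N ss" "tok ss = N"
    and cop_m: "pos ss m = x" and others: "\<And>i. i \<in> {1..N-1} \<Longrightarrow> i \<noteq> m \<Longrightarrow> pos ss i = b"
    and escapes: "x \<in> cnbhd V E (pos ss N)" "b \<in> cnbhd V E (pos ss N)" and "b \<noteq> x"
  shows "\<not> sure_capture V E N \<gamma> ss"
proof
  assume "sure_capture V E N \<gamma> ss"
  then obtain m' \<tau>' where m': "m' \<in> {1..N-1}" and \<tau>': "legal_strat V E N m' \<tau>'"
    and sure: "\<forall>p. legal_play V E N p \<and> p 0 = ss \<and> consistent N m' \<tau>' p \<longrightarrow> ends_in_capture_by N p m'"
    by (rule sure_captureE)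
  define w where "w = (if m' = m then b else x)"
  obtain c where c: "c \<in> {1..N-1}" "pos ss c = w"
  proof (cases "m' = m")
    case True
    define c where "c = (if m = 1 then 2 else 1::nat)"
    then have "c \<in> {1..N-1}" "c \<noteq> m" using N by auto
    then show ?thesis using that others True by (auto simp: w_def)
  qed (use that[of m] cop_m m w_def in auto)
  have m'_away: "pos ss m' \<noteq> w"
    using cop_m others[OF m'] \<open>b \<noteq> x\<close> by (auto simp: w_def)
  define g where "g z = (if tok z = m' then \<tau>' z else if z = ss then w else pos z (tok z))" for z
  define q where "q = rule_play N g ss"
  have vss: "valid_state V N ss" using ss(1) by (simp add: noncapture_state_def)
  have legal: "legal_play V E N q"
    unfolding q_def
  proof (rule legal_rule_play[OF vss])
    fix z assume z: "valid_state V N z"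
    consider "tok z = m'" | "tok z \<noteq> m'" "z = ss" | "tok z \<noteq> m'" "z \<noteq> ss" by blast
    then show "g z \<in> cnbhd V E (pos z (tok z))"
    proof cases
      case 1
      then show ?thesis using \<tau>' z unfolding legal_strat_def g_def by metis
    next
      case 2
      then show ?thesis using escapes ss(2) by (simp add: g_def w_def)
    qed (simp add: g_def cnbhd_def)
  qed
  have "consistent N m' \<tau>' q" unfolding q_def by (rule consistent_rule_play) (simp add: g_def)
  then obtain t where t: "capture N (q t)" "\<forall>t'<t. \<not> capture N (q t')" "pos (q t) m' = pos (q t) N"
    using sure legal unfolding ends_in_capture_by_def q_def by fastforce
  have "m' \<noteq> N" using m' N by auto
  have len: "length (fst ss) = N" "tok ss \<in> {1..N}" using vss by (auto simp: valid_state_def)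
  have q1: "pos (q 1) i = (if i = N then w else pos ss i)" if "i \<in> {1..N}" for i
    using pos_move[OF len that] ss(2) \<open>m' \<noteq> N\<close> by (simp add: q_def g_def)
  have "c \<noteq> N" using c(1) N by auto
  then have "pos (q 1) c = pos (q 1) N" using q1[of c] q1[of N] c N by auto
  then have "capture N (q 1)" using c(1) unfolding capture_def by blast
  then have "\<not> 1 < t" using t(2) by blast
  moreover have "t \<noteq> 0" using t(1) ss(1) by (cases t) (auto simp: noncapture_state_def q_def)
  ultimately have "t = 1" by simp
  moreover have "m' \<in> {1..N}" using m' by auto
  ultimately show False using t(3) q1[of m'] q1[of N] m'_away N \<open>m' \<noteq> N\<close> by auto
qed

lemma fork_state:
  assumes m: "1 \<le> m" "m < N" and V: "x \<in> V" "u \<in> V" "b \<in> V" and ne: "x \<noteq> u" "b \<noteq> u"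
  obtains ss where "noncapture_state V N ss" "tok ss = N" "pos ss m = x" "pos ss N = u"
    "\<And>i. i \<in> {1..N-1} \<Longrightarrow> i \<noteq> m \<Longrightarrow> pos ss i = b"
proof -
  define ss :: "'a state" where
    "ss = (map (\<lambda>i. if i = m - 1 then x else if i = N - 1 then u else b) [0..<N], N)"
  have pos_ss: "pos ss i = (if i = m then x else if i = N then u else b)" if "i \<in> {1..N}" for i
    using that m unfolding ss_def pos_def by auto
  have "valid_state V N ss" using V m unfolding ss_def valid_state_def tok_def by auto
  moreover have "\<not> capture N ss"
  proof
    assume "capture N ss"
    then obtain i where i: "i \<in> {1..N-1}" "pos ss i = pos ss N" unfolding capture_def by blast
    then have "i \<in> {1..N}" "i \<noteq> N" using m by auto
    then show False using i(2) pos_ss[of i] pos_ss[of N] ne m by (auto split: if_splits)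
  qed
  ultimately have "noncapture_state V N ss" by (simp add: noncapture_state_def)
  moreover have "tok ss = N" by (simp add: ss_def tok_def)
  moreover have "pos ss m = x" "pos ss N = u" using pos_ss m by auto
  moreover have "pos ss i = b" if "i \<in> {1..N-1}" "i \<noteq> m" for i
    using that pos_ss[of i] by auto
  ultimately show ?thesis using that by blast
qed

lemma robber_vertex_leaf:
  assumes G: "graph V E" and N: "N \<ge> 3" and G3: "class_G3 V E N \<gamma>"
    and s: "noncapture_state V N s" "tok s = N" "state_cop_number V E N s = 1"
  shows "\<exists>x. nbhd V E (pos s N) = {x}"
proof -
  let ?u = "pos s N"
  have "sure_capture V E N \<gamma> s" using G3 s unfolding class_G3_def by blast
  then obtain m \<tau> where m: "m \<in> {1..N-1}" and \<tau>: "legal_strat V E N m \<tau>"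
    and sure: "\<forall>p. legal_play V E N p \<and> p 0 = s \<and> consistent N m \<tau> p \<longrightarrow> ends_in_capture_by N p m"
    by (rule sure_captureE)
  have m': "1 \<le> m" "m < N" using m N by auto
  obtain x where x: "?u \<in> nbhd V E x" and forcing: "\<And>s'. valid_state V N s' \<Longrightarrow> tok s' = N
      \<Longrightarrow> pos s' m = x \<Longrightarrow> pos s' N = ?u \<Longrightarrow> forces_capture V E N s' 1"
    using capturer_adjacent_forcing_position[OF _ m' s(1,2) \<tau> sure] N by auto
  have "b = x" if b: "b \<in> nbhd V E ?u" for b
  proof (rule ccontr)
    assume "b \<noteq> x"
    have in_V: "x \<in> V" "?u \<in> V" "b \<in> V" and ne: "x \<noteq> ?u" "b \<noteq> ?u"
      using x b G unfolding nbhd_def graph_def by auto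
    obtain ss where nc: "noncapture_state V N ss" and tok_ss: "tok ss = N"
      and pos_ss: "pos ss m = x" "pos ss N = ?u" "\<And>i. i \<in> {1..N-1} \<Longrightarrow> i \<noteq> m \<Longrightarrow> pos ss i = b"
      using fork_state[OF m' in_V ne] N by auto
    have "forces_capture V E N ss 1"
      using forcing nc tok_ss pos_ss by (simp add: noncapture_state_def)
    then have "state_cop_number V E N ss = 1" by (rule state_cop_number_eq_1I) (use N in simp)
    then have "sure_capture V E N \<gamma> ss" using G3 nc unfolding class_G3_def by blast
    moreover have "x \<in> cnbhd V E ?u" "b \<in> cnbhd V E ?u"
      using nbhd_sym[OF G x] b by (auto simp: cnbhd_def)
    ultimately show False
      using fork_not_sure_capture[OF N m' nc tok_ss pos_ss(1) pos_ss(3)] \<open>b \<noteq> x\<close> pos_ss(2)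
      by metis
  qed
  then show ?thesis using nbhd_sym[OF G x] by blast
qed

subsection \<open>The vertex next to the leaf\<close>

lemma single_edge_cops_win:
  assumes G: "graph V E" and u: "u \<in> V" "nbhd V E u = {v}" and v: "nbhd V E v = {u}"
  shows "cops_win V E 1"
proof -
  have V: "V \<subseteq> {u, v}"
  proof
    fix w assume "w \<in> V"
    then have "E\<^sup>*\<^sup>* u w" using G u unfolding graph_def by blast
    then show "w \<in> {u, v}"
    proof (induction rule: rtranclp_induct)
      case (step y z)
      then have "z \<in> nbhd V E y" using G unfolding graph_def nbhd_def by blast
      then show ?case using step u v by auto
    qed simp
  qed
  have reach: "r \<in> cnbhd V E c" if "c \<in> V" "r \<in> V" for c r
    using that V u v unfolding cnbhd_def by auto
  txt \<open>The cop starts on u and then jumps onto the robber.\<close>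
  show ?thesis unfolding cops_win_def
  proof (intro exI[of _ "[u]"] exI[of _ "\<lambda>(cs, r). [r]"] conjI allI impI ballI)
    show "length [u] = 1" "set [u] \<subseteq> V" using u by auto
  next
    fix cs :: "'a list" and r assume h: "length cs = 1 \<and> set cs \<subseteq> V \<and> r \<in> V"
    then obtain c where "cs = [c]" by (metis One_nat_def length_0_conv length_Suc_conv)
    then show "list_all2 (\<lambda>a b. b \<in> cnbhd V E a) cs ((\<lambda>(cs, r). [r]) (cs, r))"
      using h reach by auto
  next
    fix r0 and q :: "nat \<Rightarrow> 'a list \<times> 'a"
    assume "q 0 = ([u], r0) \<and>
       (\<forall>t. even t \<longrightarrow> q (Suc t) = ((\<lambda>(cs, r). [r]) (q t), snd (q t))) \<and>
       (\<forall>t. odd t \<longrightarrow> fst (q (Suc t)) = fst (q t) \<and> snd (q (Suc t)) \<in> cnbhd V E (snd (q t)))"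
    then have "q 1 = ([r0], r0)" by (metis One_nat_def case_prod_conv even_zero snd_conv)
    then show "\<exists>t. snd (q t) \<in> set (fst (q t))" by (intro exI[of _ 1]) simp
  qed
qed

lemma cop_number_le:
  assumes "1 \<le> k" "cops_win V E k"
  shows "cop_number V E \<le> k"
  unfolding cop_number_def by (rule Least_le) (use assms in simp)

theorem mainTheorem14:
  fixes V :: "'v set" and E :: "'v \<Rightarrow> 'v \<Rightarrow> bool" and N :: nat and \<gamma> :: real
    and s :: "'v state"
  assumes "graph V E" and "N \<ge> 3" and "0 < \<gamma>" and "\<gamma> < 1"
    and "class_G3 V E N \<gamma>"
    and "noncapture_state V N s" and "tok s = N"
    and "state_cop_number V E N s = 1"
  shows "card (nbhd V E (pos s N)) = 1 \<and>
         (\<forall>v. nbhd V E (pos s N) = {v} \<longrightarrow>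
            (\<forall>s'. noncapture_state V N s' \<and> tok s' = N \<and> pos s' N = v \<longrightarrow>
                  state_cop_number V E N s' = \<infinity>))"
proof -
  note G = assms(1) and N = assms(2) and G3 = assms(5)
  have G1': "class_G1' V E N" and many_cops: "cop_number V E > N - 1"
    using G3 unfolding class_G3_def class_G2'_def class_G1'_def class_G_def by auto
  obtain x where x: "nbhd V E (pos s N) = {x}" using robber_vertex_leaf[OF G N G3 assms(6-8)] by blast
  have "state_cop_number V E N s' = \<infinity>"
    if v: "nbhd V E (pos s N) = {v}" and s': "noncapture_state V N s'" "tok s' = N" "pos s' N = v"
    for v s'
  proof (rule ccontr)
    assume "state_cop_number V E N s' \<noteq> \<infinity>"
    then have "state_cop_number V E N s' = 1" by (rule state_cop_number_finite_class_G1'[OF G1' s'(1)])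
    then obtain y where "nbhd V E v = {y}" using robber_vertex_leaf[OF G N G3 s'(1,2)] s'(3) by auto
    moreover have "pos s N \<in> nbhd V E v" using nbhd_sym[OF G] v by auto
    ultimately have "nbhd V E v = {pos s N}" by auto
    moreover have "pos s N \<in> V" using \<open>pos s N \<in> nbhd V E v\<close> unfolding nbhd_def by auto
    ultimately have "cop_number V E \<le> 1" using single_edge_cops_win[OF G _ v] cop_number_le by blast
    then show False using many_cops N by simp
  qed
  with x show ?thesis by auto
qed

end
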